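(* Let $(M,J,\Theta)$ be a 3-dimensional pseudohermitian manifold with vanishing torsion and constant Webster scalar curvature $W$, and let $\Sigma\subset M$ be a surface. On any open set of nonsingular points of $\Sigma$ where $H_{cr}\neq0$, the function $\mathfrak f$ defined below satisfies $$|H_{cr}|\mathfrak f=e_1(H)H_{cr}+\tfrac32V(H_{cr})+\tfrac12He_1(H_{cr})-\alpha HH_{cr},$$ and the first-variation density $\mathcal E_1$ can be rewritten as $$\mathcal E_1=|H_{cr}|^{-1/2}\Big\{-\tfrac14\operatorname{sign}(H_{cr})\,\mathfrak f\,e_1(H_{cr})+\tfrac12e_1(|H_{cr}|\mathfrak f)+\tfrac32|H_{cr}|\mathfrak f\alpha+H_{cr}\big[\tfrac92V(\alpha)+3HH_{cr}-\tfrac16H^3\big]\Big\}.$$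
   Context: $\xi=\ker\Theta$, $T$ the Reeb field. At nonsingular points of $\Sigma$ ($T\Sigma\neq\xi$), $e_1$ is a unit vector (w.r.t. $\frac12d\Theta(\cdot,J\cdot)$) spanning $T\Sigma\cap\xi$, $e_2=Je_1$, $\alpha$ is the deviation function defined by $V:=T+\alpha e_2\in T\Sigma$, and $H$ is the $p$-mean curvature. Define $H_{cr}:=e_1(\alpha)+\frac12\alpha^2+\frac16H^2+\frac14W$ and $$\mathfrak f:=|H_{cr}|^{-1}\Big\{e_1(H)\big(e_1(\alpha)+\tfrac12\alpha^2+\tfrac13H^2+\tfrac14W\big)+HV(H)+\tfrac32V\big(e_1(\alpha)+\tfrac12\alpha^2\big)-\tfrac72\alpha He_1(\alpha)-\tfrac52\alpha^3H-\tfrac23\alpha H^3-\tfrac54\alpha HW\Big\},$$ $$\mathcal E_1:=\tfrac12e_1(|H_{cr}|^{1/2}\mathfrak f)+\tfrac32|H_{cr}|^{1/2}\alpha\mathfrak f+\tfrac12\operatorname{sign}(H_{cr})|H_{cr}|^{1/2}\{9V(\alpha)+6HH_{cr}-\tfrac13H^3\}.$$ In such a manifold the Codazzi-like equation $e_1e_1(\alpha)=-6\alpha e_1(\alpha)+V(H)-\alpha H^2-4\alpha^3-2W\alpha$ holds. *)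

theory Defs
  imports "HOL-Analysis.Analysis"
begin

text \<open>Local model: a chart U (open subset of R^2) of the set of nonsingular points of
the surface Sigma. Functions on Sigma are functions real*real => real, tangent vector
fields are maps real*real => real*real, and X(g) is the derivative of g along X.\<close>

definition vder :: "(real \<times> real \<Rightarrow> real \<times> real) \<Rightarrow> (real \<times> real \<Rightarrow> real) \<Rightarrow> real \<times> real \<Rightarrow> real" where
  "vder X g p = frechet_derivative g (at p) (X p)"

fun Ck :: "nat \<Rightarrow> (real \<times> real) set \<Rightarrow> (real \<times> real \<Rightarrow> real) \<Rightarrow> bool" where
  "Ck 0 U g = continuous_on U g"
| "Ck (Suc k) U g = (continuous_on U g \<and> (\<forall>x\<in>U. g differentiable (at x)) \<and>
      (\<forall>v. Ck k U (\<lambda>x. frechet_derivative g (at x) v)))"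

definition smooth_fun :: "(real \<times> real) set \<Rightarrow> (real \<times> real \<Rightarrow> real) \<Rightarrow> bool" where
  "smooth_fun U g \<longleftrightarrow> (\<forall>k. Ck k U g)"

definition smooth_vf :: "(real \<times> real) set \<Rightarrow> (real \<times> real \<Rightarrow> real \<times> real) \<Rightarrow> bool" where
  "smooth_vf U X \<longleftrightarrow> smooth_fun U (\<lambda>p. fst (X p)) \<and> smooth_fun U (\<lambda>p. snd (X p))"

definition Hcr :: "(real \<times> real \<Rightarrow> real \<times> real) \<Rightarrow> (real \<times> real \<Rightarrow> real) \<Rightarrow> (real \<times> real \<Rightarrow> real)
   \<Rightarrow> real \<Rightarrow> real \<times> real \<Rightarrow> real" where
  "Hcr e1 \<alpha> H W p = vder e1 \<alpha> p + \<alpha> p ^ 2 / 2 + H p ^ 2 / 6 + W / 4"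

definition frakf :: "(real \<times> real \<Rightarrow> real \<times> real) \<Rightarrow> (real \<times> real \<Rightarrow> real \<times> real) \<Rightarrow> (real \<times> real \<Rightarrow> real)
   \<Rightarrow> (real \<times> real \<Rightarrow> real) \<Rightarrow> real \<Rightarrow> real \<times> real \<Rightarrow> real" where
  "frakf e1 V \<alpha> H W p = (1 / \<bar>Hcr e1 \<alpha> H W p\<bar>) *
     ( vder e1 H p * (vder e1 \<alpha> p + \<alpha> p ^ 2 / 2 + H p ^ 2 / 3 + W / 4)
     + H p * vder V H p
     + 3 / 2 * vder V (\<lambda>q. vder e1 \<alpha> q + \<alpha> q ^ 2 / 2) p
     - 7 / 2 * \<alpha> p * H p * vder e1 \<alpha> p
     - 5 / 2 * \<alpha> p ^ 3 * H p
     - 2 / 3 * \<alpha> p * H p ^ 3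
     - 5 / 4 * \<alpha> p * H p * W)"

definition E1 :: "(real \<times> real \<Rightarrow> real \<times> real) \<Rightarrow> (real \<times> real \<Rightarrow> real \<times> real) \<Rightarrow> (real \<times> real \<Rightarrow> real)
   \<Rightarrow> (real \<times> real \<Rightarrow> real) \<Rightarrow> real \<Rightarrow> real \<times> real \<Rightarrow> real" where
  "E1 e1 V \<alpha> H W p =
      1 / 2 * vder e1 (\<lambda>q. sqrt \<bar>Hcr e1 \<alpha> H W q\<bar> * frakf e1 V \<alpha> H W q) p
    + 3 / 2 * sqrt \<bar>Hcr e1 \<alpha> H W p\<bar> * \<alpha> p * frakf e1 V \<alpha> H W p
    + 1 / 2 * sgn (Hcr e1 \<alpha> H W p) * sqrt \<bar>Hcr e1 \<alpha> H W p\<bar> *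
        (9 * vder V \<alpha> p + 6 * H p * Hcr e1 \<alpha> H W p - H p ^ 3 / 3)"

end

theory Submission
  imports Defs
begin

(* For the first, e1(H_cr) = e1 e1(alpha) + alpha e1(alpha) + H e1(H)/3
   and V(H_cr) = V(e1(alpha) + alpha^2/2) + H V(H)/3; substituting the Codazzi-like equation for
   e1 e1(alpha) turns the right-hand side into the braces in the definition of f, term by term.
   The second needs no geometry: |H_cr|^(1/2) f = (|H_cr| f) / |H_cr|^(1/2), and the quotient rule
   with e1(|H_cr|^(1/2)) = sign(H_cr) e1(H_cr) / (2 |H_cr|^(1/2)) gives the rewritten density.
   Smoothness is used only to make |H_cr| f differentiable: on U it agrees with the numerator of f,
   which is smooth since smooth functions are closed under sums, products and derivatives along
   smooth vector fields. *)

lemma has_derivative_cong_open: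
  assumes "open U" "x \<in> U" "\<And>y. y \<in> U \<Longrightarrow> f y = g y"
  shows "(f has_derivative D) (at x) \<longleftrightarrow> (g has_derivative D) (at x)"
  using has_derivative_transform_within_open[of _ _ x UNIV U] assms by auto

lemma frechet_derivative_cong_open:
  assumes "open U" "x \<in> U" "\<And>y. y \<in> U \<Longrightarrow> f y = g y"
  shows "frechet_derivative f (at x) = frechet_derivative g (at x)"
  using has_derivative_cong_open[OF assms] by (simp add: frechet_derivative_def)

lemma differentiable_cong_open:
  assumes "open U" "x \<in> U" "\<And>y. y \<in> U \<Longrightarrow> f y = g y"
  shows "f differentiable (at x) \<longleftrightarrow> g differentiable (at x)"
  using has_derivative_cong_open[OF assms] by (simp add: differentiable_def)

lemma frechet_derivative_add_apply:
  assumes "f differentiable (at x)" "g differentiable (at x)"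
  shows "frechet_derivative (\<lambda>x. f x + g x) (at x) v =
    frechet_derivative f (at x) v + frechet_derivative g (at x) v"
proof -
  have "((\<lambda>x. f x + g x) has_derivative
      (\<lambda>v. frechet_derivative f (at x) v + frechet_derivative g (at x) v)) (at x)"
    by (rule has_derivative_add[OF assms[unfolded frechet_derivative_works]])
  from fun_cong[OF frechet_derivative_at[OF this], of v] show ?thesis by simp
qed

lemma frechet_derivative_mult_apply:
  fixes f g :: "'a::real_normed_vector \<Rightarrow> 'b::real_normed_algebra"
  assumes "f differentiable (at x)" "g differentiable (at x)"
  shows "frechet_derivative (\<lambda>x. f x * g x) (at x) v =
    f x * frechet_derivative g (at x) v + frechet_derivative f (at x) v * g x"
proof -
  have "((\<lambda>x. f x * g x) has_derivative
      (\<lambda>v. f x * frechet_derivative g (at x) v + frechet_derivative f (at x) v * g x)) (at x)"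
    by (rule has_derivative_mult[OF assms[unfolded frechet_derivative_works]])
  from fun_cong[OF frechet_derivative_at[OF this], of v] show ?thesis by simp
qed

lemma Ck_cong:
  assumes "open U" "\<And>x. x \<in> U \<Longrightarrow> f x = g x"
  shows "Ck k U f = Ck k U g"
  using assms(2)
proof (induction k arbitrary: f g)
  case 0
  then show ?case using continuous_on_cong by auto
next
  case (Suc k)
  have "Ck k U (\<lambda>x. frechet_derivative f (at x) v) = Ck k U (\<lambda>x. frechet_derivative g (at x) v)" for v
    by (rule Suc.IH) (simp add: frechet_derivative_cong_open[OF assms(1) _ Suc.prems])
  moreover have "continuous_on U f = continuous_on U g"
    using Suc.prems continuous_on_cong by auto
  ultimately show ?case
    using differentiable_cong_open[OF assms(1) _ Suc.prems] by simp
qed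

lemma Ck_Suc_imp_Ck: "Ck (Suc k) U f \<Longrightarrow> Ck k U f"
  by (induction k arbitrary: f) auto

lemma Ck_Suc_imp_Ck_frechet_derivative:
  "Ck (Suc k) U f \<Longrightarrow> Ck k U (\<lambda>x. frechet_derivative f (at x) v)"
  unfolding Ck.simps by blast

lemma Ck_const: "Ck k U (\<lambda>x. c)"
  by (induction k arbitrary: c) simp_all

lemma Ck_transform_frechet_derivative:
  assumes "open U" "Ck k U g" "\<And>x. x \<in> U \<Longrightarrow> frechet_derivative f (at x) v = g x"
  shows "Ck k U (\<lambda>x. frechet_derivative f (at x) v)"
  using Ck_cong[OF assms(1), of "\<lambda>x. frechet_derivative f (at x) v" g] assms(2,3) by simp

lemma Ck_add:
  assumes "open U"
  shows "Ck k U f \<Longrightarrow> Ck k U g \<Longrightarrow> Ck k U (\<lambda>x. f x + g x)"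
proof (induction k arbitrary: f g)
  case 0
  then show ?case by (simp add: continuous_on_add)
next
  case (Suc k)
  have "Ck k U (\<lambda>x. frechet_derivative (\<lambda>x. f x + g x) (at x) v)" for v
  proof (rule Ck_transform_frechet_derivative[OF assms])
    show "Ck k U (\<lambda>x. frechet_derivative f (at x) v + frechet_derivative g (at x) v)"
      using Suc.IH[OF Suc.prems[THEN Ck_Suc_imp_Ck_frechet_derivative]] .
    show "frechet_derivative (\<lambda>x. f x + g x) (at x) v =
        frechet_derivative f (at x) v + frechet_derivative g (at x) v" if "x \<in> U" for x
      using Suc.prems that by (simp add: frechet_derivative_add_apply)
  qed
  then show ?case
    using Suc.prems by (simp add: continuous_on_add differentiable_add)
qed

lemma Ck_mult:
  assumes "open U"
  shows "Ck k U f \<Longrightarrow> Ck k U g \<Longrightarrow> Ck k U (\<lambda>x. f x * g x)"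
proof (induction k arbitrary: f g)
  case 0
  then show ?case by (simp add: continuous_on_mult)
next
  case (Suc k)
  have "Ck k U (\<lambda>x. frechet_derivative (\<lambda>x. f x * g x) (at x) v)" for v
  proof (rule Ck_transform_frechet_derivative[OF assms])
    have "Ck k U (\<lambda>x. f x * frechet_derivative g (at x) v)"
      using Suc.prems(1)[THEN Ck_Suc_imp_Ck] Suc.prems(2)[THEN Ck_Suc_imp_Ck_frechet_derivative]
      by (rule Suc.IH)
    moreover have "Ck k U (\<lambda>x. frechet_derivative f (at x) v * g x)"
      using Suc.prems(1)[THEN Ck_Suc_imp_Ck_frechet_derivative] Suc.prems(2)[THEN Ck_Suc_imp_Ck]
      by (rule Suc.IH)
    ultimately show "Ck k U (\<lambda>x. f x * frechet_derivative g (at x) v + frechet_derivative f (at x) v * g x)"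
      by (rule Ck_add[OF assms])
    show "frechet_derivative (\<lambda>x. f x * g x) (at x) v =
        f x * frechet_derivative g (at x) v + frechet_derivative f (at x) v * g x" if "x \<in> U" for x
      using Suc.prems that by (simp add: frechet_derivative_mult_apply)
  qed
  then show ?case
    using Suc.prems by (simp add: continuous_on_mult differentiable_mult)
qed

lemma smooth_fun_const: "smooth_fun U (\<lambda>x. c)"
  unfolding smooth_fun_def by (simp add: Ck_const)

lemma smooth_fun_add:
  "open U \<Longrightarrow> smooth_fun U f \<Longrightarrow> smooth_fun U g \<Longrightarrow> smooth_fun U (\<lambda>x. f x + g x)"
  unfolding smooth_fun_def by (simp add: Ck_add)

lemma smooth_fun_mult:
  "open U \<Longrightarrow> smooth_fun U f \<Longrightarrow> smooth_fun U g \<Longrightarrow> smooth_fun U (\<lambda>x. f x * g x)"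
  unfolding smooth_fun_def by (simp add: Ck_mult)

lemma smooth_fun_diff:
  assumes "open U" "smooth_fun U f" "smooth_fun U g"
  shows "smooth_fun U (\<lambda>x. f x - g x)"
  using smooth_fun_add[OF assms(1,2) smooth_fun_mult[OF assms(1) smooth_fun_const assms(3)], of "-1"]
  by simp

lemma smooth_fun_divide_const:
  assumes "open U" "smooth_fun U f"
  shows "smooth_fun U (\<lambda>x. f x / c)"
  using smooth_fun_mult[OF assms smooth_fun_const, of "1 / c"] by simp

lemma smooth_fun_power:
  assumes "open U" "smooth_fun U f"
  shows "smooth_fun U (\<lambda>x. f x ^ n)"
proof (induction n)
  case 0
  show ?case using smooth_fun_const[of U 1] by simp
next
  case (Suc n)
  then show ?case using smooth_fun_mult[OF assms] by simp
qed

lemma smooth_fun_cong: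
  "open U \<Longrightarrow> (\<And>x. x \<in> U \<Longrightarrow> f x = g x) \<Longrightarrow> smooth_fun U f \<longleftrightarrow> smooth_fun U g"
  unfolding smooth_fun_def using Ck_cong[of U f g] by simp

lemma smooth_fun_frechet_derivative:
  "smooth_fun U g \<Longrightarrow> smooth_fun U (\<lambda>x. frechet_derivative g (at x) v)"
  unfolding smooth_fun_def using Ck_Suc_imp_Ck_frechet_derivative by blast

lemma smooth_fun_imp_differentiable: "smooth_fun U g \<Longrightarrow> x \<in> U \<Longrightarrow> g differentiable (at x)"
  unfolding smooth_fun_def using Ck.simps(2) by blast

lemma vder_has_derivative:
  assumes "(g has_derivative g') (at x)"
  shows "vder X g x = g' (X x)"
  unfolding vder_def frechet_derivative_at[OF assms, symmetric] ..

lemma vder_eq_partials: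
  assumes "g differentiable (at x)"
  shows "vder X g x =
    fst (X x) * frechet_derivative g (at x) (1, 0) + snd (X x) * frechet_derivative g (at x) (0, 1)"
proof -
  have lin: "linear (frechet_derivative g (at x))"
    by (rule linear_frechet_derivative[OF assms])
  have "X x = fst (X x) *\<^sub>R (1, 0) + snd (X x) *\<^sub>R (0, 1)"
    by (simp add: prod_eq_iff)
  then have "vder X g x = frechet_derivative g (at x) (fst (X x) *\<^sub>R (1, 0) + snd (X x) *\<^sub>R (0, 1))"
    unfolding vder_def by (rule arg_cong)
  also have "\<dots> = fst (X x) * frechet_derivative g (at x) (1, 0) + snd (X x) * frechet_derivative g (at x) (0, 1)"
    by (simp only: linear_add[OF lin] linear_scale[OF lin] real_scaleR_def)
  finally show ?thesis .
qed

lemma smooth_fun_vder: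
  assumes "open U" "smooth_vf U X" "smooth_fun U g"
  shows "smooth_fun U (vder X g)"
proof -
  have "smooth_fun U (\<lambda>x.
      fst (X x) * frechet_derivative g (at x) (1, 0) + snd (X x) * frechet_derivative g (at x) (0, 1))"
    using assms unfolding smooth_vf_def
    by (intro smooth_fun_add smooth_fun_mult smooth_fun_frechet_derivative) auto
  moreover have "fst (X x) * frechet_derivative g (at x) (1, 0) +
      snd (X x) * frechet_derivative g (at x) (0, 1) = vder X g x" if "x \<in> U" for x
    using vder_eq_partials[OF smooth_fun_imp_differentiable[OF assms(3) that]] by simp
  ultimately show ?thesis
    by (rule smooth_fun_cong[OF assms(1), THEN iffD1, rotated])
qed

lemma vder_add_half_square:
  assumes f: "f differentiable (at p)" and g: "g differentiable (at p)"
  shows "vder X (\<lambda>q. f q + g q ^ 2 / 2) p = vder X f p + g p * vder X g p"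
proof -
  have "((\<lambda>q. f q + g q ^ 2 / 2) has_derivative
      (\<lambda>v. frechet_derivative f (at p) v + g p * frechet_derivative g (at p) v)) (at p)"
    using f g unfolding frechet_derivative_works
    by (auto intro!: derivative_eq_intros)
  from vder_has_derivative[OF this] show ?thesis
    by (simp add: vder_def)
qed

lemma has_derivative_abs_nonzero:
  fixes h :: "'a::real_normed_vector \<Rightarrow> real"
  assumes h: "(h has_derivative h') (at p)" and nonzero: "h p \<noteq> 0"
  shows "((\<lambda>q. \<bar>h q\<bar>) has_derivative (\<lambda>v. sgn (h p) * h' v)) (at p)"
proof -
  have pos: "0 < h p * h p"
    using nonzero not_real_square_gt_zero by blast
  have "((\<lambda>q. sqrt (h q * h q)) has_derivative
      (\<lambda>v. (h p * h' v + h' v * h p) * (inverse (sqrt (h p * h p)) / 2))) (at p)"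
    by (rule has_derivative_real_sqrt[OF pos has_derivative_mult[OF h h]])
  then have "((\<lambda>q. \<bar>h q\<bar>) has_derivative
      (\<lambda>v. (h p * h' v + h' v * h p) * (inverse \<bar>h p\<bar> / 2))) (at p)"
    by (simp only: real_sqrt_abs2)
  moreover have "(\<lambda>v. (h p * h' v + h' v * h p) * (inverse \<bar>h p\<bar> / 2)) = (\<lambda>v. sgn (h p) * h' v)"
    using nonzero by (auto simp: fun_eq_iff sgn_if)
  ultimately show ?thesis
    by simp
qed

lemma has_derivative_sqrt_abs:
  fixes h :: "'a::real_normed_vector \<Rightarrow> real"
  assumes h: "(h has_derivative h') (at p)" and nonzero: "h p \<noteq> 0"
  shows "((\<lambda>q. sqrt \<bar>h q\<bar>) has_derivative (\<lambda>v. sgn (h p) * h' v / (2 * sqrt \<bar>h p\<bar>))) (at p)"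
proof -
  have "((\<lambda>q. sqrt \<bar>h q\<bar>) has_derivative
      (\<lambda>v. sgn (h p) * h' v * (inverse (sqrt \<bar>h p\<bar>) / 2))) (at p)"
    using nonzero by (intro has_derivative_real_sqrt[OF _ has_derivative_abs_nonzero[OF h nonzero]]) simp
  moreover have "(\<lambda>v. sgn (h p) * h' v * (inverse (sqrt \<bar>h p\<bar>) / 2)) =
      (\<lambda>v. sgn (h p) * h' v / (2 * sqrt \<bar>h p\<bar>))"
    by (simp add: fun_eq_iff field_simps)
  ultimately show ?thesis
    by simp
qed

(* Also for x = 0, where both sides vanish because division by 0 yields 0. *)
lemma sqrt_abs_mult_eq_divide: "sqrt \<bar>x\<bar> * y = \<bar>x\<bar> * y / sqrt \<bar>x\<bar>"
  by (cases "x = 0") (simp_all add: field_simps)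

lemma vder_sqrt_abs_mult:
  assumes G: "(\<lambda>q. \<bar>h q\<bar> * f q) differentiable (at p)" and h: "h differentiable (at p)"
    and nonzero: "h p \<noteq> 0"
  shows "vder X (\<lambda>q. sqrt \<bar>h q\<bar> * f q) p =
    (vder X (\<lambda>q. \<bar>h q\<bar> * f q) p - sgn (h p) * f p * vder X h p / 2) / sqrt \<bar>h p\<bar>"
proof -
  let ?G = "\<lambda>q. \<bar>h q\<bar> * f q"
  have "((\<lambda>q. ?G q / sqrt \<bar>h q\<bar>) has_derivative
      (\<lambda>v. - ?G p * (inverse (sqrt \<bar>h p\<bar>) *
        (sgn (h p) * frechet_derivative h (at p) v / (2 * sqrt \<bar>h p\<bar>)) * inverse (sqrt \<bar>h p\<bar>))
        + frechet_derivative ?G (at p) v / sqrt \<bar>h p\<bar>)) (at p)"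
    using nonzero
    by (intro has_derivative_divide has_derivative_sqrt_abs G[unfolded frechet_derivative_works]
        h[unfolded frechet_derivative_works]) simp_all
  from vder_has_derivative[OF this]
  have "vder X (\<lambda>q. ?G q / sqrt \<bar>h q\<bar>) p =
      - ?G p * (inverse (sqrt \<bar>h p\<bar>) * (sgn (h p) * vder X h p / (2 * sqrt \<bar>h p\<bar>))
        * inverse (sqrt \<bar>h p\<bar>)) + vder X ?G p / sqrt \<bar>h p\<bar>"
    by (simp add: vder_def)
  also have "\<dots> = (vder X ?G p - sgn (h p) * f p * vder X h p / 2) / sqrt \<bar>h p\<bar>"
    using nonzero by (simp add: field_simps)
  finally show ?thesis
    unfolding sqrt_abs_mult_eq_divide .
qed

lemma vder_Hcr:
  assumes "vder e1 \<alpha> differentiable (at p)" "\<alpha> differentiable (at p)" "H differentiable (at p)"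
  shows "vder X (Hcr e1 \<alpha> H W) p = vder X (vder e1 \<alpha>) p + \<alpha> p * vder X \<alpha> p + H p * vder X H p / 3"
proof -
  have "(Hcr e1 \<alpha> H W has_derivative (\<lambda>v. frechet_derivative (vder e1 \<alpha>) (at p) v
      + \<alpha> p * frechet_derivative \<alpha> (at p) v + H p * frechet_derivative H (at p) v / 3)) (at p)"
    using assms unfolding frechet_derivative_works Hcr_def[abs_def]
    by (auto intro!: derivative_eq_intros)
  from vder_has_derivative[OF this] show ?thesis
    by (simp add: vder_def)
qed

lemma smooth_fun_Hcr:
  assumes "open U" "smooth_vf U e1" "smooth_fun U \<alpha>" "smooth_fun U H"
  shows "smooth_fun U (Hcr e1 \<alpha> H W)"
  unfolding Hcr_def[abs_def]
  by (intro smooth_fun_add smooth_fun_divide_const smooth_fun_power smooth_fun_vder smooth_fun_const assms)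

definition frakf_numerator :: "(real \<times> real \<Rightarrow> real \<times> real) \<Rightarrow> (real \<times> real \<Rightarrow> real \<times> real)
   \<Rightarrow> (real \<times> real \<Rightarrow> real) \<Rightarrow> (real \<times> real \<Rightarrow> real) \<Rightarrow> real \<Rightarrow> real \<times> real \<Rightarrow> real" where
  "frakf_numerator e1 V \<alpha> H W p =
       vder e1 H p * (vder e1 \<alpha> p + \<alpha> p ^ 2 / 2 + H p ^ 2 / 3 + W / 4)
     + H p * vder V H p
     + 3 / 2 * vder V (\<lambda>q. vder e1 \<alpha> q + \<alpha> q ^ 2 / 2) p
     - 7 / 2 * \<alpha> p * H p * vder e1 \<alpha> p
     - 5 / 2 * \<alpha> p ^ 3 * H p
     - 2 / 3 * \<alpha> p * H p ^ 3
     - 5 / 4 * \<alpha> p * H p * W"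

lemma abs_Hcr_mult_frakf:
  "Hcr e1 \<alpha> H W p \<noteq> 0 \<Longrightarrow> \<bar>Hcr e1 \<alpha> H W p\<bar> * frakf e1 V \<alpha> H W p = frakf_numerator e1 V \<alpha> H W p"
  by (simp add: frakf_def frakf_numerator_def)

lemma smooth_fun_frakf_numerator:
  assumes "open U" "smooth_vf U e1" "smooth_vf U V" "smooth_fun U \<alpha>" "smooth_fun U H"
  shows "smooth_fun U (frakf_numerator e1 V \<alpha> H W)"
  unfolding frakf_numerator_def[abs_def]
  by (intro smooth_fun_add smooth_fun_diff smooth_fun_mult smooth_fun_divide_const smooth_fun_power
      smooth_fun_vder smooth_fun_const assms)

lemma frakf_numerator_eq:
  assumes diff: "vder e1 \<alpha> differentiable (at p)" "\<alpha> differentiable (at p)" "H differentiable (at p)"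
    and codazzi: "vder e1 (vder e1 \<alpha>) p =
        - 6 * \<alpha> p * vder e1 \<alpha> p + vder V H p - \<alpha> p * H p ^ 2 - 4 * \<alpha> p ^ 3 - 2 * W * \<alpha> p"
  shows "frakf_numerator e1 V \<alpha> H W p =
      vder e1 H p * Hcr e1 \<alpha> H W p + 3 / 2 * vder V (Hcr e1 \<alpha> H W) p
      + 1 / 2 * H p * vder e1 (Hcr e1 \<alpha> H W) p - \<alpha> p * H p * Hcr e1 \<alpha> H W p"
  unfolding frakf_numerator_def vder_Hcr[OF diff] vder_add_half_square[OF diff(1,2)] codazzi Hcr_def
  by (simp add: algebra_simps power2_eq_square power3_eq_cube)

lemma E1_eq:
  assumes "Hcr e1 \<alpha> H W differentiable (at p)"
    and "(\<lambda>q. \<bar>Hcr e1 \<alpha> H W q\<bar> * frakf e1 V \<alpha> H W q) differentiable (at p)"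
    and nonzero: "Hcr e1 \<alpha> H W p \<noteq> 0"
  shows "E1 e1 V \<alpha> H W p =
        (1 / sqrt \<bar>Hcr e1 \<alpha> H W p\<bar>) *
        ( - 1 / 4 * sgn (Hcr e1 \<alpha> H W p) * frakf e1 V \<alpha> H W p * vder e1 (Hcr e1 \<alpha> H W) p
          + 1 / 2 * vder e1 (\<lambda>q. \<bar>Hcr e1 \<alpha> H W q\<bar> * frakf e1 V \<alpha> H W q) p
          + 3 / 2 * \<bar>Hcr e1 \<alpha> H W p\<bar> * frakf e1 V \<alpha> H W p * \<alpha> p
          + Hcr e1 \<alpha> H W p * (9 / 2 * vder V \<alpha> p + 3 * H p * Hcr e1 \<alpha> H W p - H p ^ 3 / 6))"
proof -
  have "sgn (Hcr e1 \<alpha> H W p) * \<bar>Hcr e1 \<alpha> H W p\<bar> = Hcr e1 \<alpha> H W p"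
    by (rule sgn_mult_abs)
  moreover have "sqrt \<bar>Hcr e1 \<alpha> H W p\<bar> = \<bar>Hcr e1 \<alpha> H W p\<bar> / sqrt \<bar>Hcr e1 \<alpha> H W p\<bar>"
    using sqrt_abs_mult_eq_divide[of _ 1] by simp
  ultimately show ?thesis
    unfolding E1_def vder_sqrt_abs_mult[OF assms(2,1) nonzero]
    using nonzero by (simp add: field_simps)
qed

theorem proposition5p2:
  fixes U :: "(real \<times> real) set"
    and e1 V :: "real \<times> real \<Rightarrow> real \<times> real"
    and \<alpha> H :: "real \<times> real \<Rightarrow> real"
    and W :: real
  assumes "open U"
    and "smooth_vf U e1" and "smooth_vf U V"
    and "smooth_fun U \<alpha>" and "smooth_fun U H"
    and codazzi: "\<forall>p\<in>U. vder e1 (vder e1 \<alpha>) p =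
        - 6 * \<alpha> p * vder e1 \<alpha> p + vder V H p - \<alpha> p * H p ^ 2 - 4 * \<alpha> p ^ 3 - 2 * W * \<alpha> p"
    and "\<forall>p\<in>U. Hcr e1 \<alpha> H W p \<noteq> 0"
  shows "\<forall>p\<in>U.
     \<bar>Hcr e1 \<alpha> H W p\<bar> * frakf e1 V \<alpha> H W p =
        vder e1 H p * Hcr e1 \<alpha> H W p + 3 / 2 * vder V (Hcr e1 \<alpha> H W) p
        + 1 / 2 * H p * vder e1 (Hcr e1 \<alpha> H W) p - \<alpha> p * H p * Hcr e1 \<alpha> H W p
   \<and> E1 e1 V \<alpha> H W p =
        (1 / sqrt \<bar>Hcr e1 \<alpha> H W p\<bar>) *
        ( - 1 / 4 * sgn (Hcr e1 \<alpha> H W p) * frakf e1 V \<alpha> H W p * vder e1 (Hcr e1 \<alpha> H W) p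
          + 1 / 2 * vder e1 (\<lambda>q. \<bar>Hcr e1 \<alpha> H W q\<bar> * frakf e1 V \<alpha> H W q) p
          + 3 / 2 * \<bar>Hcr e1 \<alpha> H W p\<bar> * frakf e1 V \<alpha> H W p * \<alpha> p
          + Hcr e1 \<alpha> H W p * (9 / 2 * vder V \<alpha> p + 3 * H p * Hcr e1 \<alpha> H W p - H p ^ 3 / 6))"
proof -
  note smooth = assms(1-5) and nonzero = assms(7)[rule_format]
  have diff: "vder e1 \<alpha> differentiable (at p)" "\<alpha> differentiable (at p)" "H differentiable (at p)"
      "Hcr e1 \<alpha> H W differentiable (at p)" if "p \<in> U" for p
    using smooth_fun_vder smooth_fun_Hcr smooth smooth_fun_imp_differentiable[OF _ that] by blast+
  have "(\<lambda>q. \<bar>Hcr e1 \<alpha> H W q\<bar> * frakf e1 V \<alpha> H W q) differentiable (at p)" if p: "p \<in> U" for p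
  proof -
    have "(\<lambda>q. \<bar>Hcr e1 \<alpha> H W q\<bar> * frakf e1 V \<alpha> H W q) differentiable (at p) \<longleftrightarrow>
        frakf_numerator e1 V \<alpha> H W differentiable (at p)"
      by (rule differentiable_cong_open[OF assms(1) p]) (simp add: abs_Hcr_mult_frakf nonzero)
    then show ?thesis
      using smooth_fun_frakf_numerator[OF smooth] smooth_fun_imp_differentiable p by blast
  qed
  then show ?thesis
    using trans[OF abs_Hcr_mult_frakf[OF nonzero] frakf_numerator_eq[OF diff(1-3) codazzi[rule_format]]]
      E1_eq[OF diff(4) _ nonzero] by blast
qed

end
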